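(* Let $R>0$, $d\ge1$, $\Lambda^d_R=\{x\in\mathbb{R}^d:\|x\|_2\le R\}$, and let $X=\{x^{(1)},\dots,x^{(n)}\}\subset\Lambda^d_R$. Let $w\in\mathbb{R}^n$ with $\left(\sum_{i=1}^n|w_i|\right)^2\le\xi$, and let $\alpha>0$. Then for every positive integer $s$, \[ w^T\left(K_X-K^{\mathsf{HD}}_{X,s}\right)w\le\left(\sum_{i=1}^n|w_i|\right)^2\exp(2R^2)\left(\frac{2eR^2}{s}\right)^s, \] and moreover this quantity is at most $\alpha$ when $s=\Theta\!\left(\frac{\log\frac{\xi\exp(2R^2)}{\alpha}}{\log\left(\frac{1}{2eR^2}\log\frac{\xi\exp(2R^2)}{\alpha}\right)}\right)$ (with a sufficiently large constant).
   Context: $K_X$ is the $n\times n$ matrix with $(K_X)_{i,j}=\exp(-\|x^{(i)}-x^{(j)}\|^2)$. For a positive integer $s$, $K^{\mathsf{HD}}_{X,s}$ is the $n\times n$ matrix with \[ (K^{\mathsf{HD}}_{X,s})_{i,j}=\sum_{a=0}^{s-1}\left\langle e^{-\|x^{(i)}\|^2}\sqrt{\tfrac{2^a}{a!}}(x^{(i)})^{\otimes a},\ e^{-\|x^{(j)}\|^2}\sqrt{\tfrac{2^a}{a!}}(x^{(j)})^{\otimes a}\right\rangle, \] where $x^{\otimes 0}=1$, $x^{\otimes a}=x\otimes x^{\otimes(a-1)}\in\mathbb{R}^{d^a}$ (Kronecker product) and $\langle\cdot,\cdot\rangle$ is the standard inner product. *)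

theory Defs
  imports "HOL-Analysis.Analysis"
begin

text \<open>Points of R^d are vectors of type real^'d (d = CARD('d) >= 1).
  The a-fold Kronecker power of x is represented as a function on index tuples
  (lists of length a over the coordinate type); its entry at (i_1,...,i_a) is
  x_{i_1} * ... * x_{i_a}.\<close>

definition gauss_kernel :: "real^'d \<Rightarrow> real^'d \<Rightarrow> real" where
  "gauss_kernel x y = exp (- (norm (x - y))\<^sup>2)"

definition tensor_power :: "real^'d \<Rightarrow> nat \<Rightarrow> ('d::finite) list \<Rightarrow> real" where
  "tensor_power x a = (\<lambda>is. \<Prod>i\<leftarrow>is. x $ i)"

definition tensor_inner :: "nat \<Rightarrow> (('d::finite) list \<Rightarrow> real) \<Rightarrow> ('d list \<Rightarrow> real) \<Rightarrow> real" where
  "tensor_inner a f g = (\<Sum>is\<in>{is::'d list. length is = a}. f is * g is)"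

definition hd_feature :: "real^'d \<Rightarrow> nat \<Rightarrow> ('d::finite) list \<Rightarrow> real" where
  "hd_feature x a = (\<lambda>is. exp (- (norm x)\<^sup>2) * sqrt (2 ^ a / fact a) * tensor_power x a is)"

definition hd_kernel :: "nat \<Rightarrow> real^('d::finite) \<Rightarrow> real^'d \<Rightarrow> real" where
  "hd_kernel s x y = (\<Sum>a<s. tensor_inner a (hd_feature x a) (hd_feature y a))"

definition K_mat :: "(nat \<Rightarrow> real^'d) \<Rightarrow> nat \<Rightarrow> nat \<Rightarrow> real" where
  "K_mat X i j = gauss_kernel (X i) (X j)"

definition KHD_mat :: "nat \<Rightarrow> (nat \<Rightarrow> real^('d::finite)) \<Rightarrow> nat \<Rightarrow> nat \<Rightarrow> real" where
  "KHD_mat s X i j = hd_kernel s (X i) (X j)"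

end

theory Submission imports Defs begin

text \<open>Since the entries of the a-fold Kronecker powers multiply out to
  \<open>\<langle>x\<^sup>\<otimes>\<^sup>a, y\<^sup>\<otimes>\<^sup>a\<rangle> = \<langle>x, y\<rangle>\<^sup>a\<close>, both kernels share the factor \<open>exp (-\<parallel>x\<parallel>\<^sup>2 - \<parallel>y\<parallel>\<^sup>2)\<close>
  and differ only in the second factor: \<open>exp t\<close> with \<open>t = 2\<langle>x, y\<rangle>\<close> for the Gaussian,
  its Taylor polynomial of degree \<open>s - 1\<close> for \<open>K\<^sup>H\<^sup>D\<close>. As \<open>\<bar>t\<bar> \<le> 2R\<^sup>2\<close>, the Lagrange
  remainder bounds every entry of \<open>K_X - K\<^sup>H\<^sup>D\<^sub>X\<^sub>,\<^sub>s\<close> by \<open>exp (2R\<^sup>2) (2R\<^sup>2)\<^sup>s / s!\<close>, and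
  \<open>s! \<ge> (s/e)\<^sup>s\<close> turns this into \<open>exp (2R\<^sup>2) (2eR\<^sup>2/s)\<^sup>s\<close>; an entrywise bound \<open>B\<close>
  bounds the quadratic form by \<open>(\<Sum>\<bar>w\<^sub>i\<bar>)\<^sup>2 B\<close>. For the choice of \<open>s\<close>, write
  \<open>b = 2eR\<^sup>2\<close> and \<open>L = ln (\<xi> exp (2R\<^sup>2) / \<alpha>)\<close>; it suffices that \<open>s ln (s/b) \<ge> L\<close>,
  which holds as soon as \<open>s \<ge> 2L / ln (L/b)\<close> because \<open>ln u \<le> 2 \<surd>u\<close>.\<close>

lemma prod_list_map_mult:
  "(\<Prod>x\<leftarrow>xs. f x * g x) = (\<Prod>x\<leftarrow>xs. f x) * (\<Prod>x\<leftarrow>xs. (g x :: 'a::comm_monoid_mult))"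
  by (induction xs) (simp_all add: ac_simps)

lemma sum_prod_list_lists_length:
  fixes f :: "'a \<Rightarrow> 'b::comm_semiring_1"
  assumes "finite A"
  shows "(\<Sum>xs\<in>{xs. set xs \<subseteq> A \<and> length xs = n}. \<Prod>x\<leftarrow>xs. f x) = (\<Sum>x\<in>A. f x) ^ n"
proof (induction n)
  case 0
  have "{xs. set xs \<subseteq> A \<and> length xs = 0} = {[]}" by auto
  then show ?case by simp
next
  case (Suc n)
  let ?Lists = "{xs. set xs \<subseteq> A \<and> length xs = n}"
  have inj: "inj_on (\<lambda>(xs, x). x # xs) (?Lists \<times> A)"
    by (auto simp: inj_on_def)
  have "(\<Sum>xs\<in>{xs. set xs \<subseteq> A \<and> length xs = Suc n}. \<Prod>x\<leftarrow>xs. f x)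
      = (\<Sum>(xs, x)\<in>?Lists \<times> A. f x * (\<Prod>y\<leftarrow>xs. f y))"
    unfolding lists_length_Suc_eq by (subst sum.reindex[OF inj]) (simp add: o_def split_def)
  also have "\<dots> = (\<Sum>xs\<in>?Lists. \<Prod>y\<leftarrow>xs. f y) * (\<Sum>x\<in>A. f x)"
    by (simp add: sum.cartesian_product[symmetric] sum_distrib_left sum_distrib_right mult.commute)
  finally show ?case using Suc by (simp add: mult.commute)
qed

lemma tensor_inner_tensor_power:
  fixes x y :: "real^'d::finite"
  shows "tensor_inner a (tensor_power x a) (tensor_power y a) = (x \<bullet> y) ^ a"
  using sum_prod_list_lists_length[of "UNIV :: 'd set" "\<lambda>i. x $ i * y $ i" a]
  by (simp add: tensor_inner_def tensor_power_def inner_vec_def prod_list_map_mult)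

lemma tensor_inner_scale:
  "tensor_inner a (\<lambda>is. c * f is) (\<lambda>is. d * g is) = c * d * tensor_inner a f g"
  by (simp add: tensor_inner_def sum_distrib_left ac_simps)

lemma hd_kernel_eq_taylor:
  fixes x y :: "real^'d::finite"
  shows "hd_kernel s x y = exp (- (norm x)\<^sup>2 - (norm y)\<^sup>2) * (\<Sum>a<s. (2 * (x \<bullet> y)) ^ a / fact a)"
proof -
  have "tensor_inner a (hd_feature x a) (hd_feature y a)
      = exp (- (norm x)\<^sup>2 - (norm y)\<^sup>2) * ((2 * (x \<bullet> y)) ^ a / fact a)" for a
    using tensor_inner_scale[of a "exp (- (norm x)\<^sup>2) * sqrt (2 ^ a / fact a)" "tensor_power x a"
        "exp (- (norm y)\<^sup>2) * sqrt (2 ^ a / fact a)" "tensor_power y a"]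
    by (simp add: hd_feature_def tensor_inner_tensor_power mult_ac exp_diff exp_minus
        power_mult_distrib field_simps)
  then show ?thesis
    by (simp add: hd_kernel_def sum_distrib_left)
qed

lemma gauss_kernel_eq_exp_inner:
  fixes x y :: "real^'d::finite"
  shows "gauss_kernel x y = exp (- (norm x)\<^sup>2 - (norm y)\<^sup>2) * exp (2 * (x \<bullet> y))"
proof -
  have "(norm (x - y))\<^sup>2 = (norm x)\<^sup>2 + (norm y)\<^sup>2 - 2 * (x \<bullet> y)"
    by (simp add: power2_norm_eq_inner inner_diff_left inner_diff_right inner_commute)
  then show ?thesis
    by (simp add: gauss_kernel_def exp_add[symmetric])
qed

lemma power_div_fact_le_exp:
  fixes x :: real
  assumes "x \<ge> 0"
  shows "x ^ n / fact n \<le> exp x"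
proof -
  have exp_sums: "(\<lambda>m. x ^ m / fact m) sums exp x"
    using exp_converges[of x] by (simp add: divide_inverse mult.commute)
  have "(\<Sum>m\<in>{n}. x ^ m / fact m) \<le> (\<Sum>m. x ^ m / fact m)"
    using assms by (intro sum_le_suminf sums_summable[OF exp_sums]) auto
  then show ?thesis
    using sums_unique[OF exp_sums] by simp
qed

lemma power_div_fact_le:
  fixes r :: real
  assumes "r \<ge> 0" "s > 0"
  shows "r ^ s / fact s \<le> (exp 1 * r / real s) ^ s"
proof -
  have "real s ^ s \<le> exp (real s) * fact s"
    using power_div_fact_le_exp[of "real s" s] by (simp add: divide_le_eq)
  then have "r ^ s * real s ^ s \<le> r ^ s * (exp 1 ^ s * fact s)"
    using assms by (intro mult_left_mono) (simp_all add: exp_of_nat_mult[symmetric])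
  then show ?thesis
    using assms by (simp add: power_divide power_mult_distrib field_simps)
qed

lemma exp_minus_taylor_le:
  fixes t r :: real
  assumes "\<bar>t\<bar> \<le> r"
  shows "\<bar>exp t - (\<Sum>m<s. t ^ m / fact m)\<bar> \<le> exp r * r ^ s / fact s"
proof -
  obtain u where u: "\<bar>u\<bar> \<le> \<bar>t\<bar>" "exp t = (\<Sum>m<s. t ^ m / fact m) + exp u / fact s * t ^ s"
    using Maclaurin_exp_le by blast
  have "exp u * \<bar>t\<bar> ^ s \<le> exp r * r ^ s"
    using u(1) assms by (intro mult_mono power_mono) auto
  then show ?thesis
    using u(2) by (simp add: abs_mult power_abs divide_right_mono)
qed

lemma gauss_kernel_minus_hd_kernel_le:
  fixes x y :: "real^'d::finite"
  assumes "norm x \<le> R" "norm y \<le> R" "s > 0"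
  shows "\<bar>gauss_kernel x y - hd_kernel s x y\<bar> \<le> exp (2 * R\<^sup>2) * (2 * exp 1 * R\<^sup>2 / real s) ^ s"
proof -
  define t where "t = 2 * (x \<bullet> y)"
  have "\<bar>x \<bullet> y\<bar> \<le> R * R"
    using Cauchy_Schwarz_ineq2[of x y] assms mult_mono[OF assms(1,2)] by force
  then have t_le: "\<bar>t\<bar> \<le> 2 * R\<^sup>2"
    by (simp add: t_def power2_eq_square abs_mult)
  have "\<bar>gauss_kernel x y - hd_kernel s x y\<bar>
      = exp (- (norm x)\<^sup>2 - (norm y)\<^sup>2) * \<bar>exp t - (\<Sum>m<s. t ^ m / fact m)\<bar>"
    by (simp add: gauss_kernel_eq_exp_inner hd_kernel_eq_taylor t_def
        right_diff_distrib[symmetric] abs_mult)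
  also have "\<dots> \<le> \<bar>exp t - (\<Sum>m<s. t ^ m / fact m)\<bar>"
    by (intro mult_left_le_one_le) auto
  also have "\<dots> \<le> exp (2 * R\<^sup>2) * ((2 * R\<^sup>2) ^ s / fact s)"
    using exp_minus_taylor_le[OF t_le] by simp
  also have "\<dots> \<le> exp (2 * R\<^sup>2) * (exp 1 * (2 * R\<^sup>2) / real s) ^ s"
    using power_div_fact_le[of "2 * R\<^sup>2" s] assms(3) by (intro mult_left_mono) auto
  also have "\<dots> = exp (2 * R\<^sup>2) * (2 * exp 1 * R\<^sup>2 / real s) ^ s"
    by (simp add: mult_ac)
  finally show ?thesis .
qed

lemma quadratic_form_le_sum_abs_squared:
  fixes A :: "'a \<Rightarrow> 'a \<Rightarrow> real"
  assumes "\<And>i j. i \<in> I \<Longrightarrow> j \<in> I \<Longrightarrow> \<bar>A i j\<bar> \<le> B"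
  shows "(\<Sum>i\<in>I. \<Sum>j\<in>I. w i * A i j * w j) \<le> (\<Sum>i\<in>I. \<bar>w i\<bar>)\<^sup>2 * B"
proof -
  have "(\<Sum>i\<in>I. \<Sum>j\<in>I. w i * A i j * w j) \<le> (\<Sum>i\<in>I. \<Sum>j\<in>I. \<bar>w i\<bar> * B * \<bar>w j\<bar>)"
  proof (intro sum_mono)
    fix i j assume "i \<in> I" "j \<in> I"
    then have "\<bar>w i\<bar> * \<bar>A i j\<bar> * \<bar>w j\<bar> \<le> \<bar>w i\<bar> * B * \<bar>w j\<bar>"
      using assms by (intro mult_right_mono mult_left_mono) auto
    then show "w i * A i j * w j \<le> \<bar>w i\<bar> * B * \<bar>w j\<bar>"
      by (metis abs_ge_self abs_mult order_trans)
  qed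
  also have "\<dots> = (\<Sum>i\<in>I. \<bar>w i\<bar>)\<^sup>2 * B"
    by (simp add: power2_eq_square sum_distrib_left sum_distrib_right mult_ac)
  finally show ?thesis .
qed

lemma ln_le_two_sqrt:
  fixes u :: real
  assumes "u > 0"
  shows "ln u \<le> 2 * sqrt u"
proof -
  have "ln u = 2 * ln (sqrt u)"
    using assms by (simp add: ln_sqrt)
  also have "\<dots> \<le> 2 * (sqrt u - 1)"
    using ln_le_minus_one[of "sqrt u"] assms by simp
  finally show ?thesis by simp
qed

lemma le_mult_ln_div:
  fixes b L :: real
  assumes "b > 0" "L / b > 1" "real s \<ge> 2 * (L / ln (L / b))"
  shows "L \<le> real s * ln (real s / b)"
proof -
  define u where "u = L / b"
  define s0 where "s0 = 2 * (L / ln u)"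
  have "u > 1" "ln u > 0" "L = b * u"
    using assms by (simp_all add: u_def)
  then have s0_pos: "s0 > 0"
    using assms(1) by (simp add: s0_def)
  have s_ge: "real s \<ge> s0"
    using assms(3) by (simp add: s0_def u_def)
  have "sqrt u * ln u \<le> sqrt u * (2 * sqrt u)"
    using ln_le_two_sqrt[of u] \<open>u > 1\<close> by (intro mult_left_mono) auto
  also have "\<dots> = 2 * u"
    using \<open>u > 1\<close> by simp
  finally have "sqrt u \<le> s0 / b"
    using \<open>u > 1\<close> \<open>ln u > 0\<close> \<open>L = b * u\<close> assms(1) by (simp add: s0_def field_simps)
  have "ln u / 2 = ln (sqrt u)"
    using \<open>u > 1\<close> by (simp add: ln_sqrt)
  also have "\<dots> \<le> ln (s0 / b)"
    using \<open>sqrt u \<le> s0 / b\<close> \<open>u > 1\<close> s0_pos assms(1) by (subst ln_le_cancel_iff) auto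
  also have "\<dots> \<le> ln (real s / b)"
    using s_ge s0_pos assms(1) by (simp add: divide_right_mono)
  finally have "ln u / 2 \<le> ln (real s / b)" .
  then have "s0 * (ln u / 2) \<le> real s * ln (real s / b)"
    using s_ge s0_pos \<open>ln u > 0\<close> by (intro mult_mono) auto
  then show ?thesis
    using \<open>ln u > 0\<close> by (simp add: s0_def)
qed

lemma div_power_eq_exp:
  fixes b :: real
  assumes "b > 0" "s > 0"
  shows "(b / real s) ^ s = exp (- (real s * ln (real s / b)))"
proof -
  have "ln (b / real s) = - ln (real s / b)"
    using assms by (simp add: ln_div)
  moreover have "exp (real s * ln (b / real s)) = (b / real s) ^ s"
    using assms by (simp add: exp_of_nat_mult)
  ultimately show ?thesis by simp
qed

lemma kernel_error_quadratic_form_le: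
  fixes X :: "nat \<Rightarrow> real^'d::finite"
  assumes "\<forall>i<n. norm (X i) \<le> R" "s > 0"
  shows "(\<Sum>i<n. \<Sum>j<n. w i * (K_mat X i j - KHD_mat s X i j) * w j)
    \<le> (\<Sum>i<n. \<bar>w i\<bar>)\<^sup>2 * exp (2 * R\<^sup>2) * (2 * exp 1 * R\<^sup>2 / real s) ^ s"
proof -
  have "\<bar>K_mat X i j - KHD_mat s X i j\<bar> \<le> exp (2 * R\<^sup>2) * (2 * exp 1 * R\<^sup>2 / real s) ^ s"
    if "i \<in> {..<n}" "j \<in> {..<n}" for i j
    using that assms unfolding K_mat_def KHD_mat_def by (intro gauss_kernel_minus_hd_kernel_le) auto
  from quadratic_form_le_sum_abs_squared[OF this] show ?thesis
    by (simp only: mult.assoc)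
qed

lemma scaled_div_power_le:
  fixes b M c \<xi> \<alpha> :: real
  defines "L \<equiv> ln (\<xi> * M / \<alpha>)"
  assumes "b > 0" "M > 0" "\<alpha> > 0" "\<xi> > 0" "c \<le> \<xi>" "s > 0"
    and "L / b > 1" "real s \<ge> 2 * (L / ln (L / b))"
  shows "c * M * (b / real s) ^ s \<le> \<alpha>"
proof -
  have "(b / real s) ^ s \<le> exp (- L)"
    using div_power_eq_exp le_mult_ln_div assms by simp
  then have "c * M * (b / real s) ^ s \<le> \<xi> * M * exp (- L)"
    using assms by (intro mult_mono) auto
  also have "\<dots> = \<alpha>"
    using assms by (simp add: exp_minus)
  finally show ?thesis .
qed

theorem lemma2p7:
  shows
   "(\<forall>(R::real) (n::nat) (X :: nat \<Rightarrow> real^('d::finite)) (w :: nat \<Rightarrow> real) (s::nat).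
       R > 0 \<longrightarrow> (\<forall>i<n. norm (X i) \<le> R) \<longrightarrow> s > 0 \<longrightarrow>
       (\<Sum>i<n. \<Sum>j<n. w i * (K_mat X i j - KHD_mat s X i j) * w j)
         \<le> (\<Sum>i<n. \<bar>w i\<bar>)\<^sup>2 * exp (2 * R\<^sup>2) * (2 * exp 1 * R\<^sup>2 / real s) ^ s)
    \<and>
    (\<exists>C>0. \<forall>(R::real) (n::nat) (w :: nat \<Rightarrow> real) (\<xi>::real) (\<alpha>::real) (s::nat).
       R > 0 \<longrightarrow> \<alpha> > 0 \<longrightarrow> (\<Sum>i<n. \<bar>w i\<bar>)\<^sup>2 \<le> \<xi> \<longrightarrow> \<xi> > 0 \<longrightarrow>
       (let L = ln (\<xi> * exp (2 * R\<^sup>2) / \<alpha>) in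
         L / (2 * exp 1 * R\<^sup>2) > 1 \<longrightarrow> s > 0 \<longrightarrow>
         real s \<ge> C * (L / ln (L / (2 * exp 1 * R\<^sup>2))) \<longrightarrow>
         (\<Sum>i<n. \<bar>w i\<bar>)\<^sup>2 * exp (2 * R\<^sup>2) * (2 * exp 1 * R\<^sup>2 / real s) ^ s \<le> \<alpha>))"
  unfolding Let_def
proof (intro conjI allI impI exI[of _ "2::real"])
  fix R :: real and n s :: nat and X :: "nat \<Rightarrow> real^'d" and w :: "nat \<Rightarrow> real"
  assume "\<forall>i<n. norm (X i) \<le> R" "s > 0"
  then show "(\<Sum>i<n. \<Sum>j<n. w i * (K_mat X i j - KHD_mat s X i j) * w j)
      \<le> (\<Sum>i<n. \<bar>w i\<bar>)\<^sup>2 * exp (2 * R\<^sup>2) * (2 * exp 1 * R\<^sup>2 / real s) ^ s"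
    by (rule kernel_error_quadratic_form_le)
next
  fix R \<xi> \<alpha> :: real and n s :: nat and w :: "nat \<Rightarrow> real"
  assume "R > 0" "\<alpha> > 0" "(\<Sum>i<n. \<bar>w i\<bar>)\<^sup>2 \<le> \<xi>" "\<xi> > 0"
    "ln (\<xi> * exp (2 * R\<^sup>2) / \<alpha>) / (2 * exp 1 * R\<^sup>2) > 1" "s > 0"
    "real s \<ge> 2 * (ln (\<xi> * exp (2 * R\<^sup>2) / \<alpha>) / ln (ln (\<xi> * exp (2 * R\<^sup>2) / \<alpha>) / (2 * exp 1 * R\<^sup>2)))"
  then show "(\<Sum>i<n. \<bar>w i\<bar>)\<^sup>2 * exp (2 * R\<^sup>2) * (2 * exp 1 * R\<^sup>2 / real s) ^ s \<le> \<alpha>"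
    by (intro scaled_div_power_le[where \<xi> = \<xi>]) auto
qed simp

end
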